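(* Let $\alpha\in(0,1]$, let $k\in\{0,1,\dots,m-1\}$, and let $\vec r=(r_1,\dots,r_{k+1},0,\dots,0)\in\mathbb R_{\ge0}^m$ with $\sum_{i=1}^{k+1}r_i=1$. Let $\mathcal E=(N,A,\vec\sigma)$ be an election with $m$ alternatives whose profile is moderate-up-to-$k$. Let $a^*$ be any alternative selected by the Positional Scoring Matching rule $\mathrm{PSM}_{\vec r}$ on $\vec\sigma$. Then $$\mathsf{dist}_\alpha(a^*,\mathcal E)\le 2+\max\left(\alpha,\ \max_{j\in[k+1]}\Big(\sum_{i\in[k+1],\,i\ne j} r_i\max(1,\alpha^{j-i})\Big)-r_j\right).$$
   Context: An election $\mathcal E=(N,A,\vec\sigma)$ has $n$ agents $N$, $m$ alternatives $A$, and $\sigma_i=(\pi_i,\Join_i)$ with $\pi_i:[m]\to A$ a bijection ($\pi_i(1)$ most preferred) and $\Join_i:[m-1]\to\{\succ,\succ\!\!\succ\}$. Write $\mathrm{rank}_i(a)=\pi_i^{-1}(a)$ and $a\succ_i c$ if $\mathrm{rank}_i(a)<\mathrm{rank}_i(c)$. A metric $d$ on $N\cup A$ is nonnegative and symmetric, satisfies the triangle inequality, and has $d(x,x)=0$. The profile $\vec\sigma$ is $\alpha$-consistent with $d$ (mandatory elicitation) if for all $i$ and $j\in[m-1]$: - $\Join_i(j)=\,\succ$ implies $d(i,\pi_i(j+1))\ge d(i,\pi_i(j))>\alpha d(i,\pi_i(j+1))$; - $\Join_i(j)=\,\succ\!\!\succ$ implies $d(i,\pi_i(j))\le\alpha d(i,\pi_i(j+1))$.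 $\mathsf{dist}_\alpha(a,\mathcal E)=\sup_d \sum_i d(i,a)/\min_{b}\sum_i d(i,b)$, with the supremum over $\alpha$-consistent $d$. A preference $(\pi,\Join)$ is moderate-up-to-$k$ if $\Join(k+1)=\,\succ\!\!\succ$ and $\Join(i)=\,\succ$ for all $i\in[k]$. A preference with no $\succ\!\!\succ$ is moderate-up-to-$(m-1)$. A profile is moderate-up-to-$k$ if all agents' preferences are. For $\vec p\in\Delta(N)$, $\vec q\in\Delta(A)$ and $a\in A$, the $(\vec p,\vec q)$-domination graph of $a$ is the bipartite graph on $N\cup A$ with an edge $(i,c)$ iff $a\succ_i c$ or $c=a$; agent $i$ has weight $p(i)$ and alternative $c$ has weight $q(c)$. It admits a fractional perfect matching if there are nonnegative edge weights $w$ with $\sum_{c:(i,c)\text{ edge}}w(i,c)=p(i)$ for every $i$ and $\sum_{i:(i,c)\text{ edge}}w(i,c)=q(c)$ for every $c$. The rule $\mathrm{PSM}_{\vec r}$ sets $p(i)=1/n$ and $q(c)=\frac1n\sum_{i\in N}r_{\mathrm{rank}_i(c)}$. It selects an alternative whose $(\vec p,\vec q)$-domination graph admits a fractional perfect matching; such an alternative always exists. *)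

theory Defs
  imports "HOL-Library.Extended_Real"
begin

text \<open>Positions are 1..m with m = card A.
  The preference of agent i is (pref i, J i): pref i j is the alternative at rank j,
  and J i j = True encodes the strong separator (succ-succ) at position j,
  J i j = False the ordinary separator (succ). The metric lives on the disjoint
  union N + A, encoded as the sum type.\<close>

definition is_election :: "'v set \<Rightarrow> 'c set \<Rightarrow> ('v \<Rightarrow> nat \<Rightarrow> 'c) \<Rightarrow> bool" where
  "is_election N A pref \<longleftrightarrow> finite N \<and> N \<noteq> {} \<and> finite A \<and> A \<noteq> {} \<and>
     (\<forall>i\<in>N. bij_betw (pref i) {1..card A} A)"

definition rank :: "'c set \<Rightarrow> ('v \<Rightarrow> nat \<Rightarrow> 'c) \<Rightarrow> 'v \<Rightarrow> 'c \<Rightarrow> nat" where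
  "rank A pref i c = inv_into {1..card A} (pref i) c"

definition prefers :: "'c set \<Rightarrow> ('v \<Rightarrow> nat \<Rightarrow> 'c) \<Rightarrow> 'v \<Rightarrow> 'c \<Rightarrow> 'c \<Rightarrow> bool" where
  "prefers A pref i a c \<longleftrightarrow> rank A pref i a < rank A pref i c"

definition is_metric_on :: "'x set \<Rightarrow> ('x \<Rightarrow> 'x \<Rightarrow> real) \<Rightarrow> bool" where
  "is_metric_on S d \<longleftrightarrow>
     (\<forall>x\<in>S. \<forall>y\<in>S. 0 \<le> d x y \<and> d x y = d y x) \<and>
     (\<forall>x\<in>S. d x x = 0) \<and>
     (\<forall>x\<in>S. \<forall>y\<in>S. \<forall>z\<in>S. d x z \<le> d x y + d y z)"

definition alpha_consistent ::
  "real \<Rightarrow> 'v set \<Rightarrow> 'c set \<Rightarrow> ('v \<Rightarrow> nat \<Rightarrow> 'c) \<Rightarrow> ('v \<Rightarrow> nat \<Rightarrow> bool)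
     \<Rightarrow> ('v + 'c \<Rightarrow> 'v + 'c \<Rightarrow> real) \<Rightarrow> bool" where
  "alpha_consistent \<alpha> N A pref J d \<longleftrightarrow>
     is_metric_on (Inl ` N \<union> Inr ` A) d \<and>
     (\<forall>i\<in>N. \<forall>j\<in>{1..card A - 1}.
        (\<not> J i j \<longrightarrow>
           d (Inl i) (Inr (pref i (j+1))) \<ge> d (Inl i) (Inr (pref i j)) \<and>
           d (Inl i) (Inr (pref i j)) > \<alpha> * d (Inl i) (Inr (pref i (j+1)))) \<and>
        (J i j \<longrightarrow>
           d (Inl i) (Inr (pref i j)) \<le> \<alpha> * d (Inl i) (Inr (pref i (j+1)))))"

definition social_cost :: "'v set \<Rightarrow> ('v + 'c \<Rightarrow> 'v + 'c \<Rightarrow> real) \<Rightarrow> 'c \<Rightarrow> real" where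
  "social_cost N d a = (\<Sum>i\<in>N. d (Inl i) (Inr a))"

text \<open>Distortion as an extended real: the supremum over all alpha-consistent metrics of
  the cost ratio (with ereal division, x/0 = \<infinity> for x > 0).\<close>
definition distortion ::
  "real \<Rightarrow> 'v set \<Rightarrow> 'c set \<Rightarrow> ('v \<Rightarrow> nat \<Rightarrow> 'c) \<Rightarrow> ('v \<Rightarrow> nat \<Rightarrow> bool) \<Rightarrow> 'c \<Rightarrow> ereal" where
  "distortion \<alpha> N A pref J a =
     (SUP d\<in>{d. alpha_consistent \<alpha> N A pref J d}.
        ereal (social_cost N d a) / ereal (Min (social_cost N d ` A)))"

definition moderate_up_to :: "nat \<Rightarrow> nat \<Rightarrow> (nat \<Rightarrow> bool) \<Rightarrow> bool" where
  "moderate_up_to m k Jn \<longleftrightarrow>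
     (k + 1 \<le> m - 1 \<and> Jn (k+1) \<and> (\<forall>i\<in>{1..k}. \<not> Jn i)) \<or>
     (k = m - 1 \<and> (\<forall>i\<in>{1..m-1}. \<not> Jn i))"

definition has_fractional_perfect_matching ::
  "'v set \<Rightarrow> 'c set \<Rightarrow> ('v \<Rightarrow> 'c \<Rightarrow> bool) \<Rightarrow> ('v \<Rightarrow> real) \<Rightarrow> ('c \<Rightarrow> real) \<Rightarrow> bool" where
  "has_fractional_perfect_matching N A E p q \<longleftrightarrow>
     (\<exists>w :: 'v \<Rightarrow> 'c \<Rightarrow> real.
        (\<forall>i\<in>N. \<forall>c\<in>A. E i c \<longrightarrow> 0 \<le> w i c) \<and>
        (\<forall>i\<in>N. (\<Sum>c\<in>{c\<in>A. E i c}. w i c) = p i) \<and>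
        (\<forall>c\<in>A. (\<Sum>i\<in>{i\<in>N. E i c}. w i c) = q c))"

definition domination_edge :: "'c set \<Rightarrow> ('v \<Rightarrow> nat \<Rightarrow> 'c) \<Rightarrow> 'c \<Rightarrow> 'v \<Rightarrow> 'c \<Rightarrow> bool" where
  "domination_edge A pref a i c \<longleftrightarrow> prefers A pref i a c \<or> c = a"

definition psm_selects :: "(nat \<Rightarrow> real) \<Rightarrow> 'v set \<Rightarrow> 'c set \<Rightarrow> ('v \<Rightarrow> nat \<Rightarrow> 'c) \<Rightarrow> 'c \<Rightarrow> bool" where
  "psm_selects r N A pref a \<longleftrightarrow> a \<in> A \<and>
     has_fractional_perfect_matching N A (domination_edge A pref a)
       (\<lambda>i. 1 / real (card N))
       (\<lambda>c. (1 / real (card N)) * (\<Sum>i\<in>N. r (rank A pref i c)))"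

end

theory Submission
  imports Defs
begin

(* Fix an alpha-consistent metric d and any alternative b. The matching certifying a sends
   each agent i only to alternatives c that i ranks no higher than a, so
   d(i,a) <= d(i,c) <= d(i,b) + d(b,c); averaging along the matching gives
   SC(a) <= SC(b) + sum_i sum_t r_t d(b, pi_i(t)).
   For one agent put D_t = d(i, pi_i(t)) and b = pi_i(s), so d(b, pi_i(t)) <= D_s + D_t.
   Moderation up to k makes D nondecreasing, growing by a factor less than 1/alpha per step
   among the first k+1 positions and by at least 1/alpha from position k+1 to k+2. Hence
   D_t <= max(1, alpha^(s-t)) D_s when s, t <= k+1, while for s > k+1 the weighted sum
   sum_t r_t D_t <= D_(k+1) is at most alpha D_s. Either way the agent contributes at most
   (1 + X) D_s, where X = excess_bound alpha k r is the claimed bound minus 2. *)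

lemma lift_Suc_mono_le_between:
  fixes f :: "nat \<Rightarrow> 'a::preorder"
  assumes Suc_le: "\<And>n. a \<le> n \<Longrightarrow> n < b \<Longrightarrow> f n \<le> f (Suc n)"
    and "a \<le> u" "u \<le> v" "v \<le> b"
  shows "f u \<le> f v"
  using \<open>u \<le> v\<close> \<open>v \<le> b\<close>
proof (induction v rule: dec_induct)
  case base
  then show ?case by simp
next
  case (step v)
  then have "f v \<le> f (Suc v)" using Suc_le \<open>a \<le> u\<close> by simp
  with step show ?case by (auto intro: order.trans)
qed

lemma is_metric_onD:
  assumes "is_metric_on S d" "x \<in> S" "y \<in> S" "z \<in> S"
  shows "0 \<le> d x y" "d x y = d y x" "d x x = 0" "d x z \<le> d x y + d y z"
  using assms unfolding is_metric_on_def by blast+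

lemma fractional_matching_cost_le:
  fixes f g :: "'v \<Rightarrow> real" and h R :: "'c \<Rightarrow> real"
  assumes matching: "has_fractional_perfect_matching N A E
      (\<lambda>i. 1 / real (card N)) (\<lambda>c. 1 / real (card N) * R c)"
    and "finite N" "N \<noteq> {}" "finite A"
    and edge_le: "\<And>i c. i \<in> N \<Longrightarrow> c \<in> A \<Longrightarrow> E i c \<Longrightarrow> f i \<le> g i + h c"
  shows "(\<Sum>i\<in>N. f i) \<le> (\<Sum>i\<in>N. g i) + (\<Sum>c\<in>A. R c * h c)"
proof -
  define n where "n = real (card N)"
  have n_pos: "0 < n" using \<open>finite N\<close> \<open>N \<noteq> {}\<close> by (simp add: n_def card_gt_0_iff)
  obtain w where w_nonneg: "\<And>i c. i \<in> N \<Longrightarrow> c \<in> A \<Longrightarrow> E i c \<Longrightarrow> 0 \<le> w i c"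
    and row: "\<And>i. i \<in> N \<Longrightarrow> (\<Sum>c\<in>{c\<in>A. E i c}. w i c) = 1 / n"
    and column: "\<And>c. c \<in> A \<Longrightarrow> (\<Sum>i\<in>{i\<in>N. E i c}. w i c) = 1 / n * R c"
    using matching unfolding has_fractional_perfect_matching_def n_def by blast
  have agent: "f i \<le> g i + n * (\<Sum>c\<in>{c\<in>A. E i c}. w i c * h c)" if i: "i \<in> N" for i
  proof -
    have "f i = n * (\<Sum>c\<in>{c\<in>A. E i c}. w i c * f i)"
      using row[OF i] n_pos by (simp add: sum_distrib_right[symmetric])
    also have "\<dots> \<le> n * (\<Sum>c\<in>{c\<in>A. E i c}. w i c * (g i + h c))"
      using i n_pos by (intro mult_left_mono sum_mono) (auto intro: mult_left_mono w_nonneg edge_le)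
    also have "\<dots> = n * (g i * (\<Sum>c\<in>{c\<in>A. E i c}. w i c) + (\<Sum>c\<in>{c\<in>A. E i c}. w i c * h c))"
      by (simp add: algebra_simps sum.distrib sum_distrib_left)
    also have "\<dots> = g i + n * (\<Sum>c\<in>{c\<in>A. E i c}. w i c * h c)"
      using row[OF i] n_pos by (simp add: algebra_simps)
    finally show ?thesis .
  qed
  have "(\<Sum>i\<in>N. f i) \<le> (\<Sum>i\<in>N. g i) + n * (\<Sum>i\<in>N. \<Sum>c\<in>{c\<in>A. E i c}. w i c * h c)"
    using sum_mono[OF agent] by (simp add: sum.distrib sum_distrib_left)
  also have "(\<Sum>i\<in>N. \<Sum>c\<in>{c\<in>A. E i c}. w i c * h c) = (\<Sum>c\<in>A. 1 / n * R c * h c)"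
    using \<open>finite N\<close> \<open>finite A\<close>
    by (simp add: sum.swap_restrict column sum_distrib_right[symmetric])
  finally show ?thesis using n_pos by (simp add: sum_distrib_left)
qed

lemma ereal_divide_le_of_le_mult:
  fixes x y c :: real
  assumes "0 \<le> x" "0 \<le> y" "0 < c" "x \<le> c * y"
  shows "ereal x / ereal y \<le> ereal c"
proof (cases "y = 0")
  case True
  \<comment> \<open>then x = 0, and ereal 0 / ereal 0 = 0\<close>
  then show ?thesis using assms by simp
next
  case False
  then show ?thesis using assms by (simp add: divide_le_eq mult.commute)
qed

definition rank_loss :: "real \<Rightarrow> nat \<Rightarrow> (nat \<Rightarrow> real) \<Rightarrow> nat \<Rightarrow> real" where
  "rank_loss \<alpha> k r j = (\<Sum>i\<in>{1..k+1} - {j}. r i * max 1 (\<alpha> powi (int j - int i))) - r j"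

definition excess_bound :: "real \<Rightarrow> nat \<Rightarrow> (nat \<Rightarrow> real) \<Rightarrow> real" where
  "excess_bound \<alpha> k r = max \<alpha> (MAX j\<in>{1..k+1}. rank_loss \<alpha> k r j)"

lemma rank_loss_le_excess_bound: "j \<in> {1..k+1} \<Longrightarrow> rank_loss \<alpha> k r j \<le> excess_bound \<alpha> k r"
  unfolding excess_bound_def by (intro max.coboundedI2 Max_ge) auto

lemma alpha_le_excess_bound: "\<alpha> \<le> excess_bound \<alpha> k r"
  unfolding excess_bound_def by simp

locale moderate_agent =
  fixes \<alpha> :: real and k m :: nat and r D :: "nat \<Rightarrow> real"
  assumes alpha_pos: "0 < \<alpha>" and alpha_le_one: "\<alpha> \<le> 1" and k_less: "k < m"
    and weight_nonneg: "\<And>t. t \<in> {1..m} \<Longrightarrow> 0 \<le> r t"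
    and weight_vanish: "\<And>t. t \<in> {k+2..m} \<Longrightarrow> r t = 0"
    and weight_sum: "(\<Sum>t=1..k+1. r t) = 1"
    and dist_nonneg: "\<And>t. t \<in> {1..m} \<Longrightarrow> 0 \<le> D t"
    and dist_step_mono: "\<And>t. 1 \<le> t \<Longrightarrow> t < m \<Longrightarrow> D t \<le> D (Suc t)"
    and dist_step_moderate: "\<And>t. 1 \<le> t \<Longrightarrow> t \<le> k \<Longrightarrow> \<alpha> * D (Suc t) \<le> D t"
    and dist_step_jump: "k + 1 < m \<Longrightarrow> D (k + 1) \<le> \<alpha> * D (k + 2)"
begin

lemma dist_mono: "1 \<le> t \<Longrightarrow> t \<le> u \<Longrightarrow> u \<le> m \<Longrightarrow> D t \<le> D u"
  using lift_Suc_mono_le_between[of 1 m D] dist_step_mono by blast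

lemma dist_moderate:
  assumes "1 \<le> t" "t \<le> u" "u \<le> k + 1"
  shows "\<alpha> ^ u * D u \<le> \<alpha> ^ t * D t"
proof -
  have "- (\<alpha> ^ t * D t) \<le> - (\<alpha> ^ u * D u)"
  proof (rule lift_Suc_mono_le_between[of 1 "k + 1" "\<lambda>t. - (\<alpha> ^ t * D t)"])
    fix t assume "1 \<le> t" "t < k + 1"
    then have "\<alpha> * D (Suc t) \<le> D t" by (intro dist_step_moderate) auto
    then have "\<alpha> ^ t * (\<alpha> * D (Suc t)) \<le> \<alpha> ^ t * D t"
      using alpha_pos by (simp add: mult_left_mono)
    then show "- (\<alpha> ^ t * D t) \<le> - (\<alpha> ^ Suc t * D (Suc t))" by (simp add: ac_simps)
  qed (use assms in auto)
  then show ?thesis by simp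
qed

lemma dist_le_powi_scaled:
  assumes s: "s \<in> {1..k+1}" and t: "t \<in> {1..k+1}"
  shows "D t \<le> max 1 (\<alpha> powi (int s - int t)) * D s"
proof -
  have "0 \<le> D s" using s k_less by (intro dist_nonneg) auto
  moreover have "D t \<le> D s \<or> D t \<le> \<alpha> powi (int s - int t) * D s"
  proof (cases "t \<le> s")
    case True
    then show ?thesis using s t k_less dist_mono[of t s] by auto
  next
    case False
    then have "\<alpha> ^ t * D t \<le> \<alpha> ^ s * D s" using s t by (intro dist_moderate) auto
    then show ?thesis using alpha_pos by (simp add: power_int_diff field_simps)
  qed
  ultimately show ?thesis by (metis max.cobounded1 max.cobounded2 mult.left_neutral
      mult_right_mono order_trans)
qed

lemma weight_total: "(\<Sum>t=1..m. r t) = 1"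
proof -
  have "(\<Sum>t=1..m. r t) = (\<Sum>t=1..k+1. r t)"
    by (rule sum.mono_neutral_right) (use k_less weight_vanish in auto)
  then show ?thesis using weight_sum by simp
qed

lemma weighted_dist_le:
  assumes s: "s \<in> {1..m}"
  shows "(\<Sum>t\<in>{1..m} - {s}. r t * D t) \<le> (r s + excess_bound \<alpha> k r) * D s"
proof -
  have D_s: "0 \<le> D s" using s by (rule dist_nonneg)
  have "(\<Sum>t\<in>{1..m} - {s}. r t * D t) = (\<Sum>t\<in>{1..k+1} - {s}. r t * D t)"
    by (rule sum.mono_neutral_right) (use k_less weight_vanish in force)+
  also have "\<dots> \<le> (r s + excess_bound \<alpha> k r) * D s"
  proof (cases "s \<le> k + 1")
    case True
    then have "(\<Sum>t\<in>{1..k+1} - {s}. r t * D t)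
        \<le> (\<Sum>t\<in>{1..k+1} - {s}. r t * (max 1 (\<alpha> powi (int s - int t)) * D s))"
      using s k_less by (intro sum_mono mult_left_mono dist_le_powi_scaled weight_nonneg) auto
    also have "\<dots> = (rank_loss \<alpha> k r s + r s) * D s"
      by (simp add: rank_loss_def sum_distrib_right mult.assoc)
    also have "\<dots> \<le> (r s + excess_bound \<alpha> k r) * D s"
      using True s D_s rank_loss_le_excess_bound[of s] by (simp add: mult_right_mono)
    finally show ?thesis .
  next
    case False
    then have "{1..k+1} - {s} = {1..k+1}" by auto
    then have "(\<Sum>t\<in>{1..k+1} - {s}. r t * D t) \<le> (\<Sum>t=1..k+1. r t * D (k + 1))"
      using k_less by (simp, intro sum_mono mult_left_mono dist_mono weight_nonneg) auto
    also have "\<dots> = D (k + 1)" using weight_sum by (simp add: sum_distrib_right[symmetric])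
    also have "\<dots> \<le> \<alpha> * D (k + 2)" using False s by (intro dist_step_jump) auto
    also have "\<dots> \<le> excess_bound \<alpha> k r * D s"
      using False s alpha_pos D_s alpha_le_excess_bound[of \<alpha> k r]
      by (intro mult_mono dist_mono dist_nonneg) auto
    finally show ?thesis using False s weight_vanish by simp
  qed
  finally show ?thesis .
qed

lemma weighted_detour_le:
  assumes s: "s \<in> {1..m}" and E_s: "E s = 0"
    and E_le: "\<And>t. t \<in> {1..m} \<Longrightarrow> E t \<le> D s + D t"
  shows "(\<Sum>t=1..m. r t * E t) \<le> (1 + excess_bound \<alpha> k r) * D s"
proof -
  have "(\<Sum>t=1..m. r t * E t) = (\<Sum>t\<in>{1..m} - {s}. r t * E t)"
    using s E_s by (simp add: sum.remove)
  also have "\<dots> \<le> (\<Sum>t\<in>{1..m} - {s}. r t * (D s + D t))"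
    by (intro sum_mono mult_left_mono E_le weight_nonneg) auto
  also have "\<dots> = (\<Sum>t\<in>{1..m} - {s}. r t) * D s + (\<Sum>t\<in>{1..m} - {s}. r t * D t)"
    by (simp add: distrib_left sum.distrib sum_distrib_right)
  also have "(\<Sum>t\<in>{1..m} - {s}. r t) = 1 - r s"
    using s weight_total by (simp add: sum_diff1)
  also have "(1 - r s) * D s + (\<Sum>t\<in>{1..m} - {s}. r t * D t) \<le> (1 + excess_bound \<alpha> k r) * D s"
    using weighted_dist_le[OF s] by (simp add: algebra_simps)
  finally show ?thesis .
qed

end

locale moderate_election =
  fixes \<alpha> :: real and k :: nat and r :: "nat \<Rightarrow> real"
    and N :: "'v set" and A :: "'c set" and pref :: "'v \<Rightarrow> nat \<Rightarrow> 'c"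
    and J :: "'v \<Rightarrow> nat \<Rightarrow> bool"
  assumes alpha_pos: "0 < \<alpha>" and alpha_le_one: "\<alpha> \<le> 1"
    and election: "is_election N A pref"
    and k_le: "k \<le> card A - 1"
    and weight_nonneg: "\<forall>i\<in>{1..card A}. 0 \<le> r i"
    and weight_vanish: "\<forall>i\<in>{k+2..card A}. r i = 0"
    and weight_sum: "(\<Sum>i=1..k+1. r i) = 1"
    and moderate: "\<forall>i\<in>N. moderate_up_to (card A) k (J i)"
begin

lemma finite_voters: "finite N" and voters_nonempty: "N \<noteq> {}"
  and finite_alternatives: "finite A" and alternatives_nonempty: "A \<noteq> {}"
  and pref_bij: "i \<in> N \<Longrightarrow> bij_betw (pref i) {1..card A} A"
  using election unfolding is_election_def by auto

lemma rank_in_range: "i \<in> N \<Longrightarrow> c \<in> A \<Longrightarrow> rank A pref i c \<in> {1..card A}"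
  unfolding rank_def by (rule bij_betw_apply[OF bij_betw_inv_into[OF pref_bij]])

lemma pref_rank: "i \<in> N \<Longrightarrow> c \<in> A \<Longrightarrow> pref i (rank A pref i c) = c"
  unfolding rank_def by (rule bij_betw_inv_into_right[OF pref_bij])

lemma rank_pref: "i \<in> N \<Longrightarrow> t \<in> {1..card A} \<Longrightarrow> rank A pref i (pref i t) = t"
  unfolding rank_def by (rule bij_betw_inv_into_left[OF pref_bij])

lemma pref_in: "i \<in> N \<Longrightarrow> t \<in> {1..card A} \<Longrightarrow> pref i t \<in> A"
  by (rule bij_betw_apply[OF pref_bij])

lemma k_less_card: "k < card A"
proof -
  have "0 < card A" using finite_alternatives alternatives_nonempty by (simp add: card_gt_0_iff)
  then show ?thesis using k_le by linarith
qed

end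

locale consistent_metric = moderate_election +
  fixes d :: "'v + 'c \<Rightarrow> 'v + 'c \<Rightarrow> real"
  assumes consistent: "alpha_consistent \<alpha> N A pref J d"
begin

lemma metric: "is_metric_on (Inl ` N \<union> Inr ` A) d"
  using consistent unfolding alpha_consistent_def by blast

lemma separators:
  assumes "i \<in> N" "t \<in> {1..card A - 1}"
  shows "\<not> J i t \<Longrightarrow> d (Inl i) (Inr (pref i t)) \<le> d (Inl i) (Inr (pref i (Suc t)))
      \<and> \<alpha> * d (Inl i) (Inr (pref i (Suc t))) < d (Inl i) (Inr (pref i t))"
    and "J i t \<Longrightarrow> d (Inl i) (Inr (pref i t)) \<le> \<alpha> * d (Inl i) (Inr (pref i (Suc t)))"
  using consistent assms unfolding alpha_consistent_def Suc_eq_plus1 by blast+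

lemma agent_dist_nonneg: "i \<in> N \<Longrightarrow> c \<in> A \<Longrightarrow> 0 \<le> d (Inl i) (Inr c)"
  using is_metric_onD(1)[OF metric] by blast

lemma social_cost_nonneg: "c \<in> A \<Longrightarrow> 0 \<le> social_cost N d c"
  unfolding social_cost_def by (intro sum_nonneg agent_dist_nonneg)

lemma moderate_agent_dist:
  assumes i: "i \<in> N"
  shows "moderate_agent \<alpha> k (card A) r (\<lambda>t. d (Inl i) (Inr (pref i t)))"
proof
  let ?D = "\<lambda>t. d (Inl i) (Inr (pref i t))"
  have moderate_i: "moderate_up_to (card A) k (J i)" using moderate i by blast
  show D_nonneg: "0 \<le> ?D t" if "t \<in> {1..card A}" for t
    using agent_dist_nonneg[OF i pref_in[OF i that]] .
  show "?D t \<le> ?D (Suc t)" if "1 \<le> t" "t < card A" for t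
  proof -
    have t: "t \<in> {1..card A - 1}" using that by auto
    show ?thesis
    proof (cases "J i t")
      case True
      then have "?D t \<le> \<alpha> * ?D (Suc t)" by (rule separators(2)[OF i t])
      also have "\<dots> \<le> ?D (Suc t)"
        using alpha_pos alpha_le_one D_nonneg[of "Suc t"] that by (intro mult_left_le_one_le) auto
      finally show ?thesis .
    qed (use separators(1)[OF i t] in simp)
  qed
  show "\<alpha> * ?D (Suc t) \<le> ?D t" if "1 \<le> t" "t \<le> k" for t
    using separators(1)[OF i, of t] that k_less_card moderate_i unfolding moderate_up_to_def by auto
  show "(\<Sum>t=1..k+1. r t) = 1" by (fact weight_sum)
  show "?D (k + 1) \<le> \<alpha> * ?D (k + 2)" if "k + 1 < card A"
    using separators(2)[OF i, of "k + 1"] that moderate_i unfolding moderate_up_to_def by auto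
qed (use alpha_pos alpha_le_one k_less_card weight_nonneg weight_vanish in blast)+

lemma dist_le_of_prefers:
  assumes i: "i \<in> N" and "a \<in> A" "c \<in> A" and "prefers A pref i a c"
  shows "d (Inl i) (Inr a) \<le> d (Inl i) (Inr c)"
proof -
  interpret moderate_agent \<alpha> k "card A" r "\<lambda>t. d (Inl i) (Inr (pref i t))"
    using i by (rule moderate_agent_dist)
  have "rank A pref i a \<le> rank A pref i c" using assms(4) unfolding prefers_def by simp
  then have "d (Inl i) (Inr (pref i (rank A pref i a))) \<le> d (Inl i) (Inr (pref i (rank A pref i c)))"
    using rank_in_range[OF i \<open>a \<in> A\<close>] rank_in_range[OF i \<open>c \<in> A\<close>]
    by (intro dist_mono) simp_all
  then show ?thesis using pref_rank[OF i \<open>a \<in> A\<close>] pref_rank[OF i \<open>c \<in> A\<close>] by simp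
qed

lemma agent_detour_le:
  assumes i: "i \<in> N" and b: "b \<in> A"
  shows "(\<Sum>c\<in>A. r (rank A pref i c) * d (Inr b) (Inr c))
    \<le> (1 + excess_bound \<alpha> k r) * d (Inl i) (Inr b)"
proof -
  interpret moderate_agent \<alpha> k "card A" r "\<lambda>t. d (Inl i) (Inr (pref i t))"
    using i by (rule moderate_agent_dist)
  define s where "s = rank A pref i b"
  have s: "s \<in> {1..card A}" and b_eq: "pref i s = b"
    unfolding s_def using rank_in_range[OF i b] pref_rank[OF i b] by auto
  have in_S: "Inl i \<in> Inl ` N \<union> Inr ` A" "\<And>c. c \<in> A \<Longrightarrow> Inr c \<in> Inl ` N \<union> Inr ` A"
    using i by auto
  have "(\<Sum>c\<in>A. r (rank A pref i c) * d (Inr b) (Inr c))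
      = (\<Sum>t=1..card A. r (rank A pref i (pref i t)) * d (Inr b) (Inr (pref i t)))"
    by (rule sum.reindex_bij_betw[symmetric, OF pref_bij[OF i]])
  also have "\<dots> = (\<Sum>t=1..card A. r t * d (Inr b) (Inr (pref i t)))"
    using rank_pref[OF i] by simp
  also have "\<dots> \<le> (1 + excess_bound \<alpha> k r) * d (Inl i) (Inr (pref i s))"
  proof (rule weighted_detour_le[OF s])
    show "d (Inr b) (Inr (pref i s)) = 0"
      unfolding b_eq by (rule is_metric_onD(3)[OF metric in_S(2)[OF b] in_S(2)[OF b] in_S(2)[OF b]])
    show "d (Inr b) (Inr (pref i t)) \<le> d (Inl i) (Inr (pref i s)) + d (Inl i) (Inr (pref i t))"
      if "t \<in> {1..card A}" for t
    proof -
      have c: "Inr (pref i t) \<in> Inl ` N \<union> Inr ` A" using in_S(2)[OF pref_in[OF i that]] .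
      show ?thesis
        using is_metric_onD(4)[OF metric in_S(2)[OF b] in_S(1) c]
          is_metric_onD(2)[OF metric in_S(2)[OF b] in_S(1) c] b_eq by simp
    qed
  qed
  finally show ?thesis using b_eq by simp
qed

lemma psm_social_cost_le:
  assumes a: "psm_selects r N A pref a" and b: "b \<in> A"
  shows "social_cost N d a \<le> (2 + excess_bound \<alpha> k r) * social_cost N d b"
proof -
  let ?R = "\<lambda>c. \<Sum>i\<in>N. r (rank A pref i c)"
  have a_in: "a \<in> A" and matching: "has_fractional_perfect_matching N A (domination_edge A pref a)
      (\<lambda>i. 1 / real (card N)) (\<lambda>c. 1 / real (card N) * ?R c)"
    using a unfolding psm_selects_def by auto
  have "social_cost N d a \<le> social_cost N d b + (\<Sum>c\<in>A. ?R c * d (Inr b) (Inr c))"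
    unfolding social_cost_def
  proof (rule fractional_matching_cost_le[OF matching finite_voters voters_nonempty finite_alternatives])
    fix i c assume i: "i \<in> N" and c: "c \<in> A" and edge: "domination_edge A pref a i c"
    then have "d (Inl i) (Inr a) \<le> d (Inl i) (Inr c)"
      using dist_le_of_prefers[OF i a_in c] unfolding domination_edge_def by auto
    also have "\<dots> \<le> d (Inl i) (Inr b) + d (Inr b) (Inr c)"
      using is_metric_onD(4)[OF metric, of "Inl i" "Inr b" "Inr c"] i b c by simp
    finally show "d (Inl i) (Inr a) \<le> d (Inl i) (Inr b) + d (Inr b) (Inr c)" .
  qed
  also have "\<dots> = social_cost N d b + (\<Sum>i\<in>N. \<Sum>c\<in>A. r (rank A pref i c) * d (Inr b) (Inr c))"
    by (simp add: sum_distrib_right sum.swap[of _ A N])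
  also have "\<dots> \<le> social_cost N d b + (\<Sum>i\<in>N. (1 + excess_bound \<alpha> k r) * d (Inl i) (Inr b))"
    using agent_detour_le b by (simp add: sum_mono)
  also have "\<dots> = social_cost N d b + (1 + excess_bound \<alpha> k r) * social_cost N d b"
    unfolding social_cost_def by (simp add: sum_distrib_left)
  also have "\<dots> = (2 + excess_bound \<alpha> k r) * social_cost N d b"
    by (simp add: algebra_simps)
  finally show ?thesis .
qed

end

theorem lemma3:
  fixes \<alpha> :: real and k :: nat and r :: "nat \<Rightarrow> real"
    and N :: "'v set" and A :: "'c set" and pref :: "'v \<Rightarrow> nat \<Rightarrow> 'c"
    and J :: "'v \<Rightarrow> nat \<Rightarrow> bool" and a :: "'c"
  assumes "0 < \<alpha>" and "\<alpha> \<le> 1"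
    and "is_election N A pref"
    and "k \<le> card A - 1"
    and "\<forall>i\<in>{1..card A}. 0 \<le> r i"
    and "\<forall>i\<in>{k+2..card A}. r i = 0"
    and "(\<Sum>i=1..k+1. r i) = 1"
    and "\<forall>i\<in>N. moderate_up_to (card A) k (J i)"
    and "psm_selects r N A pref a"
  shows "distortion \<alpha> N A pref J a \<le>
    ereal (2 + max \<alpha>
      (MAX j\<in>{1..k+1}.
         (\<Sum>i\<in>{1..k+1} - {j}. r i * max 1 (\<alpha> powi (int j - int i))) - r j))"
proof -
  interpret moderate_election \<alpha> k r N A pref J
    using assms(1-8) by unfold_locales
  have "distortion \<alpha> N A pref J a \<le> ereal (2 + excess_bound \<alpha> k r)"
    unfolding distortion_def
  proof (rule SUP_least)
    fix d assume "d \<in> {d. alpha_consistent \<alpha> N A pref J d}"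
    then interpret consistent_metric \<alpha> k r N A pref J d by unfold_locales simp
    have "Min (social_cost N d ` A) \<in> social_cost N d ` A"
      using finite_alternatives alternatives_nonempty by (intro Min_in) auto
    then obtain b where b: "b \<in> A" and b_min: "Min (social_cost N d ` A) = social_cost N d b"
      by blast
    have a: "a \<in> A" using assms(9) unfolding psm_selects_def by simp
    show "ereal (social_cost N d a) / ereal (Min (social_cost N d ` A))
        \<le> ereal (2 + excess_bound \<alpha> k r)"
      unfolding b_min using alpha_pos alpha_le_excess_bound[of \<alpha> k r]
      by (intro ereal_divide_le_of_le_mult social_cost_nonneg psm_social_cost_le a b assms(9)) auto
  qed
  then show ?thesis by (simp add: excess_bound_def rank_loss_def)
qed

end
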